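(* Let $N\ge 2$ and let $X\subseteq \mathbb{Z}_N^2$ with $|X|=2N+1$. Suppose there is $a\in\mathbb{Z}_N$ such that $X$ contains every element of the row $\{a\}\times\mathbb{Z}_N$. Then there exists $S\subseteq X$ with $|S|=N$ and $\sum_{s\in S}s=(0,0)$.
   Context: For $a\in\mathbb{Z}_N$, the row $a$ of $\mathbb{Z}_N^2$ is the set $\{a\}\times\mathbb{Z}_N=\{(a,y):y\in\mathbb{Z}_N\}$. *)

theory Defs
  imports Main
begin

text \<open>Z_N is represented by the residues {0..<N} (type nat); Z_N^2 by pairs of residues.
  Addition in Z_N^2 is componentwise addition mod N.\<close>

definition ZN2 :: "nat \<Rightarrow> (nat \<times> nat) set" where
  "ZN2 N = {0..<N} \<times> {0..<N}"

definition row :: "nat \<Rightarrow> nat \<Rightarrow> (nat \<times> nat) set" where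
  "row N a = {a} \<times> {0..<N}"

definition sumZN2 :: "nat \<Rightarrow> (nat \<times> nat) set \<Rightarrow> nat \<times> nat" where
  "sumZN2 N S = ((\<Sum>s\<in>S. fst s) mod N, (\<Sum>s\<in>S. snd s) mod N)"

end

theory Submission
  imports Defs
begin

text \<open>Removing the full row \<open>{a} \<times> \<int>\<^sub>N\<close> from \<open>X\<close> leaves a set \<open>Y\<close> of \<open>N + 1\<close> points
  which is not contained in one row. Pigeonholing the prefix sums of the first coordinates of
  \<open>Y - {p}\<close> and of \<open>Y - {q}\<close>, for points \<open>p, q\<close> in different rows, gives a nonempty \<open>T \<subseteq> Y\<close>
  with \<open>|T| < N\<close> whose first coordinates sum to \<open>|T| \<cdot> a\<close> mod \<open>N\<close>. Completing \<open>T\<close> by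
  \<open>m = N - |T|\<close> points of row \<open>a\<close> makes the first coordinate vanish, and since the sums of
  \<open>m\<close>-subsets of \<open>{0..<N}\<close> fill an interval of length \<open>m (N - m) + 1 \<ge> N\<close>, the second coordinate
  can be made \<open>0\<close> as well.\<close>

lemma ex_subset_sum_dvd_card:
  fixes g :: "'a \<Rightarrow> int"
  assumes "finite A" "card A = n" "n > 0"
  shows "\<exists>T\<subseteq>A. T \<noteq> {} \<and> int n dvd sum g T"
proof -
  obtain h where h: "bij_betw h {0..<n} A"
    using ex_bij_betw_nat_finite[OF assms(1)] assms(2) by auto
  define P where "P j = (\<Sum>i\<in>{0..<j}. g (h i))" for j
  define f where "f j = P j mod int n" for j
  have "f ` {0..n} \<subseteq> {0..<int n}" using assms(3) by (auto simp: f_def)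
  hence "card (f ` {0..n}) \<le> n"
    by (metis card_atLeastLessThan_int card_mono finite_atLeastLessThan_int diff_zero nat_int)
  hence "\<not> inj_on f {0..n}" using pigeonhole[of f "{0..n}"] by simp
  then obtain i j where "i \<in> {0..n}" "j \<in> {0..n}" "i \<noteq> j" "f i = f j"
    unfolding inj_on_def by blast
  then obtain i j where ij: "i < j" "j \<le> n" "f i = f j"
    by (metis atLeastAtMost_iff linorder_neqE_nat)
  have sub: "{i..<j} \<subseteq> {0..<n}" using ij by auto
  have inj: "inj_on h {i..<j}" using h sub unfolding bij_betw_def by (meson inj_on_subset)
  have "sum g (h ` {i..<j}) = P j - P i"
    unfolding P_def using sum.reindex[OF inj, of g] sum_diff_nat_ivl[of 0 i j "\<lambda>x. g (h x)"] ij
    by auto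
  moreover have "int n dvd P j - P i" using ij(3) unfolding f_def by (metis mod_eq_dvd_iff)
  moreover have "h ` {i..<j} \<subseteq> A" using h sub unfolding bij_betw_def by auto
  moreover have "h ` {i..<j} \<noteq> {}" using ij by auto
  ultimately show ?thesis by metis
qed

text \<open>Applying the previous lemma to \<open>A - {x}\<close> and \<open>A - {y}\<close>: if both returned the whole set,
  \<open>g x\<close> and \<open>g y\<close> would agree mod \<open>n\<close>.\<close>

lemma ex_proper_subset_sum_dvd:
  fixes g :: "'a \<Rightarrow> int"
  assumes "finite A" "card A = Suc n" "n > 0"
    and "x \<in> A" "y \<in> A" "\<not> int n dvd g x - g y"
  shows "\<exists>T\<subseteq>A. T \<noteq> {} \<and> card T < n \<and> int n dvd sum g T"
proof (rule ccontr)
  assume none: "\<not> ?thesis"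
  have whole: "T = A - {z}" if "z \<in> A" "T \<subseteq> A - {z}" "T \<noteq> {}" "int n dvd sum g T" for z T
  proof -
    have "\<not> card T < n" using none that by blast
    with that assms(1,2) show ?thesis by (metis card_Diff_singleton card_seteq diff_Suc_1
          finite_Diff not_less)
  qed
  have dvd_remove: "int n dvd sum g (A - {z})" if "z \<in> A" for z
  proof -
    have "card (A - {z}) = n" using that assms(1,2) by simp
    then obtain T where "T \<subseteq> A - {z}" "T \<noteq> {}" "int n dvd sum g T"
      using ex_subset_sum_dvd_card[of "A - {z}" n g] assms(1,3) by auto
    with whole that show ?thesis by metis
  qed
  have "g x - g y = sum g (A - {y}) - sum g (A - {x})"
    using sum.remove[OF assms(1) assms(4), of g] sum.remove[OF assms(1) assms(5), of g] by linarith
  hence "int n dvd g x - g y" using dvd_remove assms(4,5) by simp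
  with assms(6) show False ..
qed

lemma double_sum_interval: "2 * (\<Sum>i=t..<t+n. i) + n = n * (2 * t + (n::nat))"
  by (induction n) (auto simp: algebra_simps)

text \<open>The witness is an interval of \<open>m + 1\<close> consecutive numbers with one of them removed.\<close>

lemma ex_subset_card_sum:
  fixes m N d :: nat
  assumes "0 < m" "m \<le> N" "d \<le> m * (N - m)"
  shows "\<exists>B\<subseteq>{0..<N}. card B = m \<and> \<Sum>B = (\<Sum>i<m. i) + d"
proof -
  define t where "t = d div m"
  define e where "e = d mod m"
  define j where "j = t + m - e"
  define B where "B = {t..<t+(m+1)} - {j}"
  have e: "e < m" using assms unfolding e_def by auto
  have d: "d = t * m + e" unfolding t_def e_def by simp
  have "t * m \<le> (N - m) * m" using assms(3) d by (metis add_leD1 mult.commute)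
  hence t: "t \<le> N - m" using assms(1) mult_le_cancel2 by blast
  have j: "j \<in> {t..<t+(m+1)}" using e unfolding j_def by auto
  have "B \<subseteq> {0..<N}"
  proof (cases "t = N - m")
    case True
    hence "e = 0" using assms(3) d by (simp add: mult.commute)
    with True assms show ?thesis unfolding B_def j_def by auto
  next
    case False
    with t assms show ?thesis unfolding B_def by auto
  qed
  moreover have "card B = m" unfolding B_def using j by simp
  moreover have "\<Sum>B = (\<Sum>i<m. i) + d"
  proof -
    have "\<Sum>B = (\<Sum>i=t..<t+(m+1). i) - j" unfolding B_def using j by (simp add: sum_diff1_nat)
    moreover have "2 * (\<Sum>i=t..<t+(m+1). i) + (m+1) = (m+1) * (2*t+(m+1))"
      by (rule double_sum_interval)
    moreover have "2 * (\<Sum>i<m. i) + m = m * m"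
      using double_sum_interval[of 0 m] by (simp add: atLeast0LessThan)
    moreover have "j \<le> (\<Sum>i=t..<t+(m+1). i)" using j by (intro member_le_sum) auto
    ultimately show ?thesis unfolding d j_def using e by (simp add: algebra_simps)
  qed
  ultimately show ?thesis by blast
qed

lemma ex_subset_card_sum_mod:
  fixes m N r :: nat
  assumes "0 < m" "m < N"
  shows "\<exists>B\<subseteq>{0..<N}. card B = m \<and> \<Sum>B mod N = r mod N"
proof -
  define s where "s = (\<Sum>i<m. i)"
  define d where "d = (r + N * s - s) mod N"
  obtain k where k: "N = m + k" "0 < k"
    using assms by (metis add_diff_inverse_nat less_imp_le_nat not_less zero_less_diff)
  have "m + k \<le> m * k + 1" using assms k by (cases m; cases k) auto
  hence "N - 1 \<le> m * (N - m)" using k by simp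
  moreover have "d < N" using assms unfolding d_def by simp
  ultimately obtain B where B: "B \<subseteq> {0..<N}" "card B = m" "\<Sum>B = s + d"
    using ex_subset_card_sum[OF assms(1), of N d] assms unfolding s_def by fastforce
  have "s \<le> N * s" using assms by simp
  hence "s + (r + N * s - s) = r + N * s" by arith
  hence "(s + d) mod N = (r + N * s) mod N"
    unfolding d_def by (metis mod_add_right_eq)
  with B show ?thesis by (intro exI[of _ B]) simp
qed

lemma ex_fst_neq_if_card_gt:
  assumes "Y \<subseteq> ZN2 N" "card Y > N"
  shows "\<exists>p\<in>Y. \<exists>q\<in>Y. fst p \<noteq> fst q"
proof (rule ccontr)
  assume same_fst: "\<not> ?thesis"
  have "Y \<noteq> {}" using assms(2) by auto
  then obtain y where y: "y \<in> Y" by blast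
  have "Y \<subseteq> {fst y} \<times> {0..<N}"
  proof
    fix p assume p: "p \<in> Y"
    have "fst p = fst y" using same_fst p y by blast
    moreover have "snd p < N" using assms(1) p unfolding ZN2_def by (auto simp: mem_Times_iff)
    ultimately show "p \<in> {fst y} \<times> {0..<N}" by (cases p) simp
  qed
  hence "card Y \<le> N" using card_mono[of "{fst y} \<times> {0..<N}" Y] by (simp add: card_cartesian_product)
  with assms(2) show False by simp
qed

lemma ex_small_subset_fst_sum_dvd:
  assumes "Y \<subseteq> ZN2 N" "card Y = Suc N" "0 < N"
  shows "\<exists>T\<subseteq>Y. T \<noteq> {} \<and> card T < N \<and> int N dvd (\<Sum>p\<in>T. int (fst p) - int a)"
proof -
  define g where "g = (\<lambda>p :: nat \<times> nat. int (fst p) - int a)"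
  have finY: "finite Y" using assms(1) unfolding ZN2_def by (rule finite_subset) simp
  obtain p q where pq: "p \<in> Y" "q \<in> Y" "fst p \<noteq> fst q"
    using ex_fst_neq_if_card_gt[OF assms(1)] assms(2) by (metis lessI)
  have "\<not> int N dvd g p - g q"
  proof
    assume "int N dvd g p - g q"
    hence "int (fst p) mod int N = int (fst q) mod int N" by (simp add: g_def mod_eq_dvd_iff)
    moreover have "fst p < N" "fst q < N"
      using pq(1,2) assms(1) unfolding ZN2_def by (auto simp: mem_Times_iff)
    ultimately show False using pq(3) by simp
  qed
  from ex_proper_subset_sum_dvd[OF finY assms(2,3) pq(1,2) this] show ?thesis
    unfolding g_def .
qed

lemma sum_singleton_times: "sum f ({a} \<times> B) = (\<Sum>b\<in>B. f (a, b))"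
proof -
  have "{a} \<times> B = Pair a ` B" by auto
  moreover have "inj_on (Pair a) B" by (rule inj_onI) simp
  ultimately show ?thesis using sum.reindex[of "Pair a" B f] by simp
qed

lemma row_completion:
  assumes "T \<subseteq> ZN2 N" "T \<inter> row N a = {}" "T \<noteq> {}" "card T < N"
    and "int N dvd (\<Sum>p\<in>T. int (fst p) - int a)"
  shows "\<exists>S\<subseteq>T \<union> row N a. card S = N \<and> sumZN2 N S = (0, 0)"
proof -
  have finT: "finite T" using assms(1) unfolding ZN2_def by (rule finite_subset) simp
  define k where "k = card T"
  define m where "m = N - k"
  have "0 < k" using assms(3) finT unfolding k_def by (simp add: card_gt_0_iff)
  hence mk: "0 < m" "m < N" "m + k = N" using assms(4) unfolding m_def k_def by arith+
  obtain B where B: "B \<subseteq> {0..<N}" "card B = m" "\<Sum>B mod N = (N - (\<Sum>p\<in>T. snd p) mod N) mod N"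
    using ex_subset_card_sum_mod[OF mk(1,2)] by blast
  define S where "S = T \<union> {a} \<times> B"
  have finB: "finite B" using B(1) by (rule finite_subset) simp
  have row_part: "{a} \<times> B \<subseteq> row N a" using B(1) unfolding row_def by (intro Sigma_mono) auto
  hence disj: "T \<inter> {a} \<times> B = {}" using assms(2) by blast
  have "S \<subseteq> T \<union> row N a" using row_part unfolding S_def by blast
  moreover have "card S = N"
    unfolding S_def using card_Un_disjoint[OF finT _ disj] finB B(2) mk(3) k_def
    by (simp add: card_cartesian_product)
  moreover have "(\<Sum>s\<in>S. fst s) mod N = 0"
  proof -
    have "int (\<Sum>s\<in>S. fst s) = int (\<Sum>p\<in>T. fst p) + int m * int a"
      unfolding S_def using sum.union_disjoint[OF finT _ disj, of fst] finB B(2)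
      by (simp add: sum_singleton_times)
    also have "\<dots> = (\<Sum>p\<in>T. int (fst p) - int a) + int N * int a"
    proof -
      have "int N * int a = int m * int a + int k * int a"
        using mk(3) by (metis distrib_right of_nat_add)
      thus ?thesis unfolding k_def by (simp add: sum_subtractf of_nat_sum)
    qed
    finally have "int N dvd int (\<Sum>s\<in>S. fst s)" using assms(5) by simp
    hence "N dvd (\<Sum>s\<in>S. fst s)" by (simp only: of_nat_dvd_iff)
    thus ?thesis by simp
  qed
  moreover have "(\<Sum>s\<in>S. snd s) mod N = 0"
  proof -
    have "(\<Sum>s\<in>S. snd s) = (\<Sum>p\<in>T. snd p) + \<Sum>B"
      unfolding S_def using sum.union_disjoint[OF finT _ disj, of snd] finB
      by (simp add: sum_singleton_times)
    also have "\<dots> mod N = ((\<Sum>p\<in>T. snd p) mod N + (N - (\<Sum>p\<in>T. snd p) mod N)) mod N"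
      using B(3) by (metis mod_add_left_eq mod_add_right_eq)
    also have "(\<Sum>p\<in>T. snd p) mod N + (N - (\<Sum>p\<in>T. snd p) mod N) = N"
      using mk(2) by (simp add: less_imp_le)
    finally show ?thesis by simp
  qed
  ultimately show ?thesis unfolding sumZN2_def by (intro exI[of _ S]) simp
qed

theorem theorem3p1:
  fixes N :: nat and X :: "(nat \<times> nat) set"
  assumes "N \<ge> 2"
    and "X \<subseteq> ZN2 N"
    and "card X = 2 * N + 1"
    and "\<exists>a\<in>{0..<N}. row N a \<subseteq> X"
  shows "\<exists>S\<subseteq>X. card S = N \<and> sumZN2 N S = (0, 0)"
proof -
  obtain a where a: "row N a \<subseteq> X" using assms(4) by blast
  define Y where "Y = X - row N a"
  have finX: "finite X" using assms(2) unfolding ZN2_def by (rule finite_subset) simp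
  have "card (row N a) = N" by (simp add: row_def card_cartesian_product)
  hence "card Y = Suc N"
    using card_Diff_subset[OF _ a] finX assms(3) unfolding Y_def row_def by simp
  moreover have YZ: "Y \<subseteq> ZN2 N" using assms(2) unfolding Y_def by blast
  ultimately obtain T where T: "T \<subseteq> Y" "T \<noteq> {}" "card T < N"
      "int N dvd (\<Sum>p\<in>T. int (fst p) - int a)"
    using ex_small_subset_fst_sum_dvd[of Y N a] assms(1) by auto
  have "T \<subseteq> ZN2 N" using T(1) YZ by (rule order_trans)
  moreover have "T \<inter> row N a = {}" using T(1) unfolding Y_def by blast
  ultimately have "\<exists>S\<subseteq>T \<union> row N a. card S = N \<and> sumZN2 N S = (0, 0)"
    using T(2-4) by (rule row_completion)
  moreover have "T \<union> row N a \<subseteq> X" using T(1) a unfolding Y_def by blast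
  ultimately show ?thesis by (blast dest: order_trans)
qed

end
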